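(* Let $I$ be a $Q$-interval of $\mathcal{P}$ with $D(I)=\{x_1,\ldots,x_r\}$ that is a $b$-nested common interval. Then at most one of the intervals $Int(x_i)$, $1\leq i\leq r$, is $b$-large, and if such an interval exists, it is a $b$-nested common interval.
   Context: Let $n\geq 1$, $K\geq 1$ and let $\mathcal{P}=\{P_1,\ldots,P_K\}$ be permutations of $\{1,\ldots,n\}$ with $P_1=(1,2,\ldots,n)$. For integers $i\leq j$ write $(i..j)=\{i,\ldots,j\}$. A common interval of $\mathcal{P}$ is a set of integers occupying consecutive positions in every $P_k$; all have the form $(i..j)$, and singletons and $(1..n)$ are common. Fix a positive integer $b$. A common interval $I$ is $b$-small if $|I|\leq b$, $b$-large otherwise; it is $b$-nested if $|I|=1$ or $I$ strictly contains a $b$-nested common interval $J$ with $|J|\geq|I|-b$ (recursive on size). Two intervals $(i..j)$, $(k..l)$ overlap if $i<k\leq j<l$ or $k<i\leq l<j$. A common interval is strong if it overlaps no other common interval. The PQ-tree $T$: nodes are the strong common intervals ($Int(x)$ is the interval of node $x$), root $(1..n)$, leaves the singletons, parent of $y$ is the node whose interval is the smallest strong common interval strictly containing $Int(y)$. A node $x$ with children set $D$ is a $P$-node if no union $\bigcup_{z\in D'}Int(z)$, $D'\subset D$, $2\leq|D'|<|D|$, is common; otherwise it is a $Q$-node with children ordered $y_1,\ldots,y_r$ so that $\max Int(y_i)+1=\min Int(y_{i+1})$. It is known that a set is a common interval iff it is $Int(x)$ for a node $x$ or the union of the intervals of consecutive children of a unique $Q$-node. The domain $D(I)$ of a common interval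 $I$ is the set of children of $x$ if $I=Int(x)$ is strong, and otherwise the set of consecutive children of the $Q$-node whose intervals have union $I$. A $P$-interval is a strong common interval $Int(x)$ with $x$ a $P$-node; all other common intervals are $Q$-intervals. *)

theory Defs
  imports Main
begin

text \<open>A family of permutations of {1..n} is a list Ps of lists; each list is a
permutation (listing the elements in positional order), and the first one is
the identity (1,2,...,n).\<close>

definition perm_family :: "nat \<Rightarrow> nat list list \<Rightarrow> bool" where
  "perm_family n Ps \<longleftrightarrow> n \<ge> 1 \<and> Ps \<noteq> [] \<and> hd Ps = [1..<n+1] \<and>
     (\<forall>P\<in>set Ps. distinct P \<and> set P = {1..n})"

definition consec_in :: "nat list \<Rightarrow> nat set \<Rightarrow> bool" where
  "consec_in P S \<longleftrightarrow> (\<exists>i j. {k. k < length P \<and> P ! k \<in> S} = {i..j})"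

definition common :: "nat \<Rightarrow> nat list list \<Rightarrow> nat set \<Rightarrow> bool" where
  "common n Ps S \<longleftrightarrow> S \<noteq> {} \<and> S \<subseteq> {1..n} \<and> (\<forall>P\<in>set Ps. consec_in P S)"

definition overlap :: "nat set \<Rightarrow> nat set \<Rightarrow> bool" where
  "overlap A B \<longleftrightarrow>
     (Min A < Min B \<and> Min B \<le> Max A \<and> Max A < Max B) \<or>
     (Min B < Min A \<and> Min A \<le> Max B \<and> Max B < Max A)"

definition strong :: "nat \<Rightarrow> nat list list \<Rightarrow> nat set \<Rightarrow> bool" where
  "strong n Ps S \<longleftrightarrow> common n Ps S \<and> (\<forall>T. common n Ps T \<longrightarrow> \<not> overlap S T)"

text \<open>Children of a node X of the PQ-tree: strong intervals Y whose parent
(the smallest strong interval strictly containing Y) is X.\<close>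
definition children :: "nat \<Rightarrow> nat list list \<Rightarrow> nat set \<Rightarrow> nat set set" where
  "children n Ps X = {Y. strong n Ps Y \<and> Y \<subset> X \<and>
       (\<forall>Z. strong n Ps Z \<and> Y \<subset> Z \<longrightarrow> X \<subseteq> Z)}"

definition Pnode :: "nat \<Rightarrow> nat list list \<Rightarrow> nat set \<Rightarrow> bool" where
  "Pnode n Ps X \<longleftrightarrow> strong n Ps X \<and>
     \<not> (\<exists>D'. D' \<subset> children n Ps X \<and> 2 \<le> card D' \<and> common n Ps (\<Union>D'))"

definition Qnode :: "nat \<Rightarrow> nat list list \<Rightarrow> nat set \<Rightarrow> bool" where
  "Qnode n Ps X \<longleftrightarrow> strong n Ps X \<and> \<not> Pnode n Ps X"

definition Q_interval :: "nat \<Rightarrow> nat list list \<Rightarrow> nat set \<Rightarrow> bool" where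
  "Q_interval n Ps I \<longleftrightarrow> common n Ps I \<and> \<not> Pnode n Ps I"

definition is_domain :: "nat \<Rightarrow> nat list list \<Rightarrow> nat set \<Rightarrow> nat set set \<Rightarrow> bool" where
  "is_domain n Ps I D \<longleftrightarrow>
     (strong n Ps I \<and> D = children n Ps I) \<or>
     (common n Ps I \<and> \<not> strong n Ps I \<and>
        (\<exists>X. Qnode n Ps X \<and> D \<subseteq> children n Ps X \<and> \<Union>D = I))"

inductive b_nested :: "nat \<Rightarrow> nat list list \<Rightarrow> nat \<Rightarrow> nat set \<Rightarrow> bool"
  for n Ps b where
  single: "common n Ps I \<Longrightarrow> card I = 1 \<Longrightarrow> b_nested n Ps b I"
| step: "common n Ps I \<Longrightarrow> b_nested n Ps b J \<Longrightarrow> J \<subset> I \<Longrightarrow>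
           card I \<le> card J + b \<Longrightarrow> b_nested n Ps b I"

definition b_large :: "nat \<Rightarrow> nat set \<Rightarrow> bool" where
  "b_large b I \<longleftrightarrow> card I > b"

end

theory Submission
  imports Defs
begin

text \<open>The children of a node are pairwise disjoint strong intervals inside the node, so it
  suffices to show: if \<open>I\<close> is \<open>b\<close>-nested, then among pairwise disjoint strong intervals
  contained in \<open>I\<close> at most one is \<open>b\<close>-large, and that one is \<open>b\<close>-nested. Induct on the
  nesting chain \<open>J \<subset> I\<close> with \<open>|I| \<le> |J| + b\<close>. A strong interval meeting \<open>J\<close> either
  contains \<open>J\<close> or is contained in \<open>J\<close>, since it cannot overlap \<open>J\<close>; everything disjoint
  from \<open>J\<close> lies in \<open>I - J\<close>, which has at most \<open>b\<close> elements. If some member contains \<open>J\<close>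
  it is the only candidate and is \<open>b\<close>-nested via \<open>J\<close>; otherwise the members meeting \<open>J\<close>
  lie inside \<open>J\<close> and the induction hypothesis applies.\<close>

lemma common_finite: "common n Ps S \<Longrightarrow> finite S"
  unfolding common_def using finite_subset by blast

lemma strong_common: "strong n Ps S \<Longrightarrow> common n Ps S"
  unfolding strong_def by blast

lemma b_nested_common: "b_nested n Ps b I \<Longrightarrow> common n Ps I"
  by (induction rule: b_nested.induct)

text \<open>Consecutiveness in the identity permutation, the head of the family, makes every
  common interval an integer interval.\<close>

lemma common_eq_atLeastAtMost:
  assumes pf: "perm_family n Ps" and c: "common n Ps S"
  shows "S = {Min S..Max S}"
proof -
  have ne: "S \<noteq> {}" and sub: "S \<subseteq> {1..n}" using c unfolding common_def by auto
  have fin: "finite S" using c common_finite by blast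
  have "Ps \<noteq> []" "hd Ps = [1..<n+1]" using pf unfolding perm_family_def by blast+
  then have "[1..<n+1] \<in> set Ps" by (metis list.set_sel(1))
  then obtain i j where ij: "{k. k < length [1..<n+1] \<and> [1..<n+1] ! k \<in> S} = {i..j}"
    using c unfolding common_def consec_in_def by metis
  have "{k. k < length [1..<n+1] \<and> [1..<n+1] ! k \<in> S} = {k. k < n \<and> Suc k \<in> S}"
    by (auto simp del: upt_Suc simp add: nth_upt)
  with ij have positions: "{k. k < n \<and> Suc k \<in> S} = {i..j}" by simp
  have mn: "Min S \<in> S" "Max S \<in> S" using fin ne by auto
  with sub have bounds: "1 \<le> Min S" "Max S \<le> n" by auto
  have "Min S \<le> Max S" using fin mn(2) by simp
  have fill: "x \<in> S" if x: "Min S \<le> x" "x \<le> Max S" for x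
  proof -
    have "Min S - 1 < n" "Max S - 1 < n" "Suc (Min S - 1) \<in> S" "Suc (Max S - 1) \<in> S"
      using mn bounds \<open>Min S \<le> Max S\<close> by simp_all
    then have "Min S - 1 \<in> {i..j}" "Max S - 1 \<in> {i..j}"
      unfolding positions[symmetric] by blast+
    with x have "x - 1 \<in> {i..j}" by auto
    then have "Suc (x - 1) \<in> S" unfolding positions[symmetric] by blast
    with x bounds show "x \<in> S" by simp
  qed
  show ?thesis
  proof
    show "S \<subseteq> {Min S..Max S}" using fin by auto
    show "{Min S..Max S} \<subseteq> S" using fill by auto
  qed
qed

lemma strong_subset_if_meets_common:
  assumes pf: "perm_family n Ps" and cJ: "common n Ps J" and sY: "strong n Ps Y"
    and meet: "J \<inter> Y \<noteq> {}" and not_sub: "\<not> J \<subseteq> Y"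
  shows "Y \<subseteq> J"
proof -
  have J: "J = {Min J..Max J}" and Y: "Y = {Min Y..Max Y}"
    using common_eq_atLeastAtMost[OF pf] cJ strong_common[OF sY] by blast+
  from meet obtain e where "e \<in> J" "e \<in> Y" by blast
  then have "Min J \<le> e" "e \<le> Max J" "Min Y \<le> e" "e \<le> Max Y"
    using J Y by (metis atLeastAtMost_iff)+
  moreover have "Min J < Min Y \<or> Max Y < Max J"
    using not_sub J Y by (metis atLeastatMost_subset_iff linorder_not_le)
  moreover have "\<not> overlap Y J" using sY cJ unfolding strong_def by blast
  ultimately have "Min J \<le> Min Y" "Max Y \<le> Max J" unfolding overlap_def by linarith+
  then show ?thesis using J Y by (metis atLeastatMost_subset_iff)
qed

lemma children_disjoint:
  assumes pf: "perm_family n Ps"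
    and Y1: "Y1 \<in> children n Ps X" and Y2: "Y2 \<in> children n Ps X" and ne: "Y1 \<noteq> Y2"
  shows "Y1 \<inter> Y2 = {}"
proof (rule ccontr)
  assume meet: "Y1 \<inter> Y2 \<noteq> {}"
  have no_strict_sub: "\<not> Y \<subset> Y'" if "Y \<in> children n Ps X" "Y' \<in> children n Ps X" for Y Y'
    using that unfolding children_def by blast
  have "Y1 \<subseteq> Y2 \<or> Y2 \<subseteq> Y1"
    using strong_subset_if_meets_common[OF pf, of Y1 Y2] meet Y1 Y2
    unfolding children_def strong_def by blast
  with ne no_strict_sub[OF Y1 Y2] no_strict_sub[OF Y2 Y1] show False by blast
qed

lemma is_domain_children:
  assumes "is_domain n Ps I D"
  obtains X where "D \<subseteq> children n Ps X" "\<Union>D \<subseteq> I"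
  using assms unfolding is_domain_def children_def by blast

lemma not_b_large_if_subset_Diff:
  assumes fin: "finite I" and JI: "J \<subseteq> I" and card_I: "card I \<le> card J + b"
    and Y: "Y \<subseteq> I - J"
  shows "\<not> b_large b Y"
proof -
  have "card Y \<le> card (I - J)" using Y fin by (simp add: card_mono)
  also have "\<dots> = card I - card J" using JI fin by (meson card_Diff_subset finite_subset)
  finally show ?thesis using card_I unfolding b_large_def by linarith
qed

lemma b_nested_disjoint_strong_subsets:
  assumes pf: "perm_family n Ps" and nested: "b_nested n Ps b I"
    and strong: "\<forall>Y\<in>D. strong n Ps Y" and sub: "\<Union>D \<subseteq> I"
    and disj: "\<forall>Y\<in>D. \<forall>Y'\<in>D. Y \<noteq> Y' \<longrightarrow> Y \<inter> Y' = {}"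
  shows "(\<forall>Y\<in>D. \<forall>Y'\<in>D. b_large b Y \<and> b_large b Y' \<longrightarrow> Y = Y') \<and>
         (\<forall>Y\<in>D. b_large b Y \<longrightarrow> b_nested n Ps b Y)"
  using nested strong sub disj
proof (induction I arbitrary: D rule: b_nested.induct)
  case (single I)
  have "Y = I" if "Y \<in> D" for Y
  proof -
    have "Y \<noteq> {}" using that single.prems(1) unfolding strong_def common_def by blast
    moreover have "Y \<subseteq> I" using that single.prems(2) by blast
    ultimately show "Y = I" using single.hyps(2) by (metis card_1_singletonE subset_singletonD)
  qed
  with b_nested.single[OF single.hyps] show ?case by metis
next
  case (step I J)
  have fin: "finite I" using step.hyps(1) by (rule common_finite)
  have small: "\<not> b_large b Y" if "Y \<subseteq> I - J" for Y
    using not_b_large_if_subset_Diff[OF fin _ step.hyps(4) that] step.hyps(3) by blast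
  show ?case
  proof (cases "\<exists>Y0\<in>D. J \<subseteq> Y0")
    case True
    then obtain Y0 where Y0: "Y0 \<in> D" "J \<subseteq> Y0" by blast
    have others_small: "\<not> b_large b Y" if "Y \<in> D" "Y \<noteq> Y0" for Y
    proof (rule small)
      show "Y \<subseteq> I - J" using step.prems(2,3) that Y0 by blast
    qed
    have "b_nested n Ps b Y0"
    proof (cases "J = Y0")
      case False
      have "Y0 \<subseteq> I" using Y0(1) step.prems(2) by blast
      with fin have "card Y0 \<le> card I" by (rule card_mono)
      with step.hyps(4) have "card Y0 \<le> card J + b" by linarith
      moreover have "common n Ps Y0" using Y0(1) step.prems(1) strong_common by blast
      ultimately show ?thesis using b_nested.step step.hyps(2) Y0(2) False by blast
    qed (use step.hyps(2) in simp)
    with others_small Y0(1) show ?thesis by metis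
  next
    case False
    define D' where "D' = {Y\<in>D. Y \<inter> J \<noteq> {}}"
    have "Y \<subseteq> J" if "Y \<in> D'" for Y
    proof (rule strong_subset_if_meets_common[OF pf b_nested_common[OF step.hyps(2)]])
      show "strong n Ps Y" "J \<inter> Y \<noteq> {}" using that step.prems(1) unfolding D'_def by auto
      show "\<not> J \<subseteq> Y" using that False unfolding D'_def by blast
    qed
    then have IH: "(\<forall>Y\<in>D'. \<forall>Y'\<in>D'. b_large b Y \<and> b_large b Y' \<longrightarrow> Y = Y') \<and>
        (\<forall>Y\<in>D'. b_large b Y \<longrightarrow> b_nested n Ps b Y)"
      using step.prems(1,3) by (intro step.IH) (auto simp: D'_def)
    have "\<not> b_large b Y" if "Y \<in> D" "Y \<notin> D'" for Y
      using small that step.prems(2) unfolding D'_def by blast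
    with IH show ?thesis by metis
  qed
qed

theorem lemma4:
  fixes n b :: nat and Ps :: "nat list list" and I :: "nat set" and D :: "nat set set"
  assumes "perm_family n Ps"
    and "b > 0"
    and "Q_interval n Ps I"
    and "is_domain n Ps I D"
    and "b_nested n Ps b I"
  shows "(\<forall>Y\<in>D. \<forall>Y'\<in>D. b_large b Y \<and> b_large b Y' \<longrightarrow> Y = Y') \<and>
         (\<forall>Y\<in>D. b_large b Y \<longrightarrow> b_nested n Ps b Y)"
proof -
  obtain X where X: "D \<subseteq> children n Ps X" "\<Union>D \<subseteq> I"
    using is_domain_children[OF assms(4)] .
  have "\<forall>Y\<in>D. strong n Ps Y" using X(1) unfolding children_def by blast
  moreover have "\<forall>Y\<in>D. \<forall>Y'\<in>D. Y \<noteq> Y' \<longrightarrow> Y \<inter> Y' = {}"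
    using X(1) children_disjoint[OF assms(1)] by blast
  ultimately show ?thesis
    using b_nested_disjoint_strong_subsets[OF assms(1,5)] X(2) by blast
qed

end
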